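(* Let $F$ be a field of characteristic $p > 0$. If $\phi \in F(z)$ is a rational function with no finite critical point, then there exist polynomials $f_1, f_2, g_1, g_2 \in F[z]$ such that \[ \phi(z) = \frac{f_1(z^p) + z f_2(z^p)}{g_1(z^p) + z g_2(z^p)}, \] and $f_2 g_1 - f_1 g_2$ is a nonzero constant function.
   Context: Finite critical points are taken over an algebraic closure $\overline{F}$: a point $x \in \overline F$ is a finite critical point of $\phi$ if, for a fractional linear transformation $\sigma$ over $\overline F$ with $\sigma(\phi(x)) \neq \infty$, $\frac{d(\sigma\circ\phi)}{dz}(x) = 0$. *)

theory Defs
  imports "HOL-Algebra.Algebraic_Closure_Type" "HOL-Computational_Algebra.Normalized_Fraction"
begin

text \<open>A point x of the algebraic closure is a finite critical
  point if for some fractional linear transformation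
  \<sigma>(w) = (\<alpha> w + \<beta>)/(\<gamma> w + \<delta>), \<alpha>\<delta> - \<beta>\<gamma> \<noteq> 0, over the algebraic closure,
  \<sigma>\<circ>\<phi> = N/D with N = \<alpha> a + \<beta> b, D = \<gamma> a + \<delta> b (again in lowest terms) is finite
  at x (D(x) \<noteq> 0) and its derivative (N'D - N D')/D^2 vanishes at x.\<close>

definition finite_critical_point :: "'a::field poly fract \<Rightarrow> 'a alg_closure \<Rightarrow> bool" where
  "finite_critical_point \<phi> x \<longleftrightarrow>
     (\<exists>a0 b0 :: 'a poly. b0 \<noteq> 0 \<and> coprime a0 b0 \<and> \<phi> = Fract a0 b0 \<and>
       (let a = map_poly to_ac a0; b = map_poly to_ac b0
        in \<exists>\<alpha> \<beta> \<gamma> \<delta> :: 'a alg_closure. \<alpha> * \<delta> - \<beta> * \<gamma> \<noteq> 0 \<and>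
             (let N = smult \<alpha> a + smult \<beta> b; D = smult \<gamma> a + smult \<delta> b
              in poly D x \<noteq> 0 \<and> poly (pderiv N * D - N * pderiv D) x = 0)))"

end

theory Submission
  imports Defs
begin

text \<open>Write \<phi> = a/b in lowest terms and let W = a'b - ab' be the Wronskian. Where b does not
  vanish, the derivative of \<phi> vanishes exactly at the roots of W; at a pole, 1/\<phi> = b/a has
  Wronskian -W. So if \<phi> has no finite critical point, W has no root in the algebraic closure
  and is a nonzero constant. Differentiating, a''b = ab'', and coprimality forces
  a'' = b'' = 0. In characteristic p this leaves only exponents congruent to 0 or 1 mod p,
  i.e. a = f1(z^p) + z f2(z^p) and b = g1(z^p) + z g2(z^p), and then
  W = (f2 g1 - f1 g2)(z^p), whence f2 g1 - f1 g2 is the constant W.\<close>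

definition wronskian :: "'a::idom poly \<Rightarrow> 'a poly \<Rightarrow> 'a poly" where
  "wronskian a b = pderiv a * b - a * pderiv b"

lemma wronskian_swap: "wronskian b a = - wronskian a b"
  by (simp add: wronskian_def)

lemma pderiv_wronskian: "pderiv (wronskian a b) = pderiv (pderiv a) * b - a * pderiv (pderiv b)"
  by (simp add: wronskian_def pderiv_diff pderiv_mult algebra_simps)

lemma map_poly_to_ac_add: "map_poly to_ac (p + q) = map_poly to_ac p + map_poly to_ac q"
  by (intro poly_eqI) (simp add: coeff_map_poly)

lemma map_poly_to_ac_diff: "map_poly to_ac (p - q) = map_poly to_ac p - map_poly to_ac q"
  by (intro poly_eqI) (simp add: coeff_map_poly)

lemma map_poly_to_ac_mult: "map_poly to_ac (p * q) = map_poly to_ac p * map_poly to_ac q"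
  by (intro poly_eqI) (simp add: coeff_map_poly coeff_mult to_ac_sum)

lemma map_poly_to_ac_pderiv: "map_poly to_ac (pderiv p) = pderiv (map_poly to_ac p)"
  by (intro poly_eqI) (simp add: coeff_map_poly coeff_pderiv)

lemma map_poly_to_ac_wronskian:
  "map_poly to_ac (wronskian a b) = wronskian (map_poly to_ac a) (map_poly to_ac b)"
  by (simp add: wronskian_def map_poly_to_ac_diff map_poly_to_ac_mult map_poly_to_ac_pderiv)

lemma coprime_imp_bezout:
  fixes a b :: "'a::euclidean_ring"
  assumes "coprime a b"
  shows "\<exists>u v. u * a + v * b = 1"
proof -
  define S where "S = {u * a + v * b | u v. True}"
  have S_diff: "x - c * y \<in> S" if xy: "x \<in> S" "y \<in> S" for x y c
  proof -
    obtain u v u' v' where "x = u * a + v * b" "y = u' * a + v' * b"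
      using xy unfolding S_def by blast
    then have "x - c * y = (u - c * u') * a + (v - c * v') * b" by (simp add: algebra_simps)
    then show ?thesis by (auto simp: S_def)
  qed
  have S_mult: "c * x \<in> S" if "x \<in> S" for x c
    using S_diff[OF _ that, of 0 "- c"] by (simp add: S_def) (metis add.commute add_0 mult_zero_left)
  have "a \<in> S" "b \<in> S" by (auto simp: S_def intro: exI[of _ 0] exI[of _ 1])
  moreover have "a \<noteq> 0 \<or> b \<noteq> 0" using assms by auto
  ultimately obtain r where r: "r \<in> S" "r \<noteq> 0"
    and r_min: "\<And>s. s \<in> S \<Longrightarrow> s \<noteq> 0 \<Longrightarrow> euclidean_size r \<le> euclidean_size s"
    using ex_has_least_nat[of "\<lambda>s. s \<in> S \<and> s \<noteq> 0" _ euclidean_size] by blast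
  \<comment> \<open>the remainder of an element of S modulo r lies in S but is smaller than r\<close>
  have "r dvd x" if "x \<in> S" for x
  proof -
    have "x mod r \<in> S" using S_diff[OF that r(1), of "x div r"] by (simp add: minus_div_mult_eq_mod)
    then have "x mod r = 0" using r_min mod_size_less[OF r(2), of x] by fastforce
    then show ?thesis by (simp add: mod_eq_0_iff_dvd)
  qed
  then have "is_unit r" using assms \<open>a \<in> S\<close> \<open>b \<in> S\<close> by (simp add: coprime_common_divisor)
  then have "1 \<in> S" using S_mult[OF r(1), of "1 div r"] by simp
  then show ?thesis by (auto simp: S_def)
qed

lemma coprime_dvd_mult_imp_dvd:
  fixes a b c :: "'a::euclidean_ring"
  assumes "coprime a c" and "a dvd b * c"
  shows "a dvd b"
proof -
  obtain u v where "u * a + v * c = 1" using coprime_imp_bezout[OF assms(1)] by blast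
  then have "b = (b * u) * a + v * (b * c)" by (metis mult.right_neutral distrib_left ac_simps)
  with assms(2) show ?thesis by (metis dvd_add dvd_mult dvd_triv_right)
qed

lemma Fract_coprime_exists:
  fixes \<phi> :: "'a::euclidean_ring fract"
  shows "\<exists>a b. b \<noteq> 0 \<and> coprime a b \<and> \<phi> = Fract a b"
proof -
  obtain a0 b0 where "\<phi> = Fract a0 b0" "b0 \<noteq> 0" by (cases \<phi>) auto
  then obtain a b where ab: "b \<noteq> 0" "\<phi> = Fract a b"
    and b_min: "\<And>a' b'. b' \<noteq> 0 \<Longrightarrow> \<phi> = Fract a' b' \<Longrightarrow> euclidean_size b \<le> euclidean_size b'"
    using ex_has_least_nat[of "\<lambda>(a, b). b \<noteq> 0 \<and> \<phi> = Fract a b" "(a0, b0)" "euclidean_size \<circ> snd"]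
    by fastforce
  \<comment> \<open>cancelling a non-unit common divisor would give a smaller denominator\<close>
  have "coprime a b"
  proof (rule coprimeI, rule ccontr)
    fix c assume "c dvd a" "c dvd b" "\<not> is_unit c"
    then obtain a' b' where "a = c * a'" "b = c * b'" by (auto elim!: dvdE)
    with ab have "c \<noteq> 0" "b' \<noteq> 0" "\<phi> = Fract a' b'" by (auto simp: mult_fract_cancel)
    with b_min have "euclidean_size b \<le> euclidean_size b'" by blast
    moreover have "euclidean_size b' < euclidean_size b"
      using \<open>b = c * b'\<close> \<open>c \<noteq> 0\<close> \<open>b' \<noteq> 0\<close> \<open>\<not> is_unit c\<close> by (simp add: euclidean_size_times_nonunit)
    ultimately show False by simp
  qed
  with ab show ?thesis by blast
qed

lemma coprime_imp_no_common_root_to_ac: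
  fixes a b :: "'a::field poly"
  assumes "coprime a b"
  shows "poly (map_poly to_ac a) x \<noteq> 0 \<or> poly (map_poly to_ac b) x \<noteq> 0"
proof -
  obtain u v where "u * a + v * b = 1" using coprime_imp_bezout[OF assms] by blast
  then have "poly (map_poly to_ac (u * a + v * b)) x = 1" by simp
  then show ?thesis by (auto simp: map_poly_to_ac_add map_poly_to_ac_mult)
qed

lemma finite_critical_pointI:
  fixes a b :: "'a::field poly"
  defines "A \<equiv> map_poly to_ac a" and "B \<equiv> map_poly to_ac b"
  assumes "b \<noteq> 0" and "coprime a b" and "\<alpha> * \<delta> - \<beta> * \<gamma> \<noteq> 0"
    and "poly (smult \<gamma> A + smult \<delta> B) x \<noteq> 0"
    and "poly (wronskian (smult \<alpha> A + smult \<beta> B) (smult \<gamma> A + smult \<delta> B)) x = 0"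
  shows "finite_critical_point (Fract a b) x"
  using assms unfolding finite_critical_point_def wronskian_def Let_def by blast

lemma wronskian_root_imp_finite_critical_point:
  fixes a b :: "'a::field poly"
  assumes "b \<noteq> 0" and "coprime a b" and "poly (map_poly to_ac (wronskian a b)) x = 0"
  shows "finite_critical_point (Fract a b) x"
proof (cases "poly (map_poly to_ac b) x = 0")
  case False
  with assms show ?thesis
    by (intro finite_critical_pointI[where \<alpha> = 1 and \<beta> = 0 and \<gamma> = 0 and \<delta> = 1])
       (simp_all add: map_poly_to_ac_wronskian)
next
  case True
  \<comment> \<open>at a pole of \<phi>, use \<sigma>(w) = 1/w\<close>
  with assms(2) have "poly (map_poly to_ac a) x \<noteq> 0"
    using coprime_imp_no_common_root_to_ac by blast
  moreover have "poly (wronskian (map_poly to_ac b) (map_poly to_ac a)) x = 0"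
    using assms(3) by (simp add: map_poly_to_ac_wronskian wronskian_swap[of "map_poly to_ac b"])
  ultimately show ?thesis
    using assms(1,2)
    by (intro finite_critical_pointI[where \<alpha> = 0 and \<beta> = 1 and \<gamma> = 1 and \<delta> = 0]) simp_all
qed

lemma no_finite_critical_point_imp_wronskian_const:
  fixes a b :: "'a::field poly"
  assumes "b \<noteq> 0" and "coprime a b" and "\<forall>x. \<not> finite_critical_point (Fract a b) x"
  shows "\<exists>c. c \<noteq> 0 \<and> wronskian a b = [:c:]"
proof -
  let ?W = "map_poly to_ac (wronskian a b)"
  have no_root: "poly ?W x \<noteq> 0" for x
    using assms wronskian_root_imp_finite_critical_point by blast
  then have "?W \<noteq> 0" by auto
  moreover have "degree ?W = 0"
    using alg_closed_imp_poly_has_root no_root by (metis neq0_conv)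
  ultimately show ?thesis
    by (metis degree_0_id degree_map_poly map_poly_0 pCons_eq_0_iff to_ac_eq_0_iff)
qed

lemma degree_pderiv_less:
  fixes p :: "'a::idom poly"
  assumes "pderiv p \<noteq> 0"
  shows "degree (pderiv p) < degree p"
proof -
  have "degree p \<noteq> 0"
    using assms by (metis degree_0_id pderiv_pCons pderiv_0 add_0 pCons_0_0)
  moreover have "degree (pderiv p) \<le> degree p - 1"
    by (rule degree_le) (auto simp: coeff_pderiv coeff_eq_0)
  ultimately show ?thesis by linarith
qed

lemma dvd_pderiv_pderiv_imp_eq_0:
  fixes p :: "'a::idom poly"
  assumes "p dvd pderiv (pderiv p)"
  shows "pderiv (pderiv p) = 0"
proof (rule ccontr)
  assume nz: "pderiv (pderiv p) \<noteq> 0"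
  then have "degree p \<le> degree (pderiv (pderiv p))"
    using assms by (rule dvd_imp_degree_le[rotated])
  moreover have "pderiv p \<noteq> 0" using nz by auto
  ultimately show False using degree_pderiv_less[OF nz] degree_pderiv_less[of p] by linarith
qed

lemma pderiv_wronskian_eq_0_imp_pderiv_pderiv_eq_0:
  fixes a b :: "'a::field poly"
  assumes "coprime a b" and "pderiv (wronskian a b) = 0"
  shows "pderiv (pderiv a) = 0" and "pderiv (pderiv b) = 0"
proof -
  have eq: "pderiv (pderiv a) * b = a * pderiv (pderiv b)"
    using assms(2) by (simp add: pderiv_wronskian)
  have "a dvd pderiv (pderiv a) * b" by (simp add: eq)
  with assms(1) have "a dvd pderiv (pderiv a)" by (rule coprime_dvd_mult_imp_dvd)
  then show "pderiv (pderiv a) = 0" by (rule dvd_pderiv_pderiv_imp_eq_0)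
  have "coprime b a" using assms(1) by (simp add: coprime_commute)
  moreover have "b dvd pderiv (pderiv b) * a" by (simp flip: eq add: mult.commute)
  ultimately have "b dvd pderiv (pderiv b)" by (rule coprime_dvd_mult_imp_dvd)
  then show "pderiv (pderiv b) = 0" by (rule dvd_pderiv_pderiv_imp_eq_0)
qed

lemma pcompose_monom_monom: "pcompose (monom c j) (monom 1 n) = monom (c::'a::comm_ring_1) (j * n)"
proof -
  have "pcompose ([:0, 1:] ^ j) (monom 1 n) = monom (1::'a) n ^ j"
    by (induction j) (simp_all add: pcompose_mult pcompose_pCons pcompose_1)
  then have "pcompose ([:0, 1:] ^ j) (monom 1 n) = monom (1::'a) (j * n)"
    by (simp add: monom_power mult.commute)
  then show ?thesis by (simp add: monom_altdef[of c j] pcompose_smult smult_monom)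
qed

lemma monom_eq_pcompose_monom:
  assumes "k mod n = 0"
  shows "monom (c::'a::comm_ring_1) k = pcompose (monom c (k div n)) (monom 1 n)"
proof -
  have "k = k div n * n" using assms div_mult_mod_eq[of k n] by simp
  then show ?thesis by (simp add: pcompose_monom_monom)
qed

lemma monom_eq_X_mult_pcompose_monom:
  assumes "k mod n = 1"
  shows "monom (c::'a::comm_ring_1) k = [:0, 1:] * pcompose (monom c (k div n)) (monom 1 n)"
proof -
  have "k = Suc (k div n * n)" using assms div_mult_mod_eq[of k n] by simp
  then have "monom c k = pCons 0 (monom c (k div n * n))" by (metis monom_Suc)
  then show ?thesis by (simp add: pcompose_monom_monom)
qed

lemma pderiv_pcompose_monom_CHAR: "pderiv (pcompose f (monom 1 CHAR('a))) = (0::'a::idom poly)"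
  by (simp add: pderiv_pcompose pderiv_monom)

lemma pderiv_pderiv_eq_0_imp_mod_CHAR:
  fixes a :: "'a::idom poly"
  assumes "pderiv (pderiv a) = 0" and "coeff a k \<noteq> 0"
  shows "k mod CHAR('a) = 0 \<or> k mod CHAR('a) = 1"
proof (cases "k \<ge> 2")
  case True
  have "coeff (pderiv (pderiv a)) (k - 2) = of_nat (k - 1) * (of_nat k * coeff a k)"
    using True by (simp add: coeff_pderiv Suc_diff_Suc numeral_2_eq_2)
  with assms have "of_nat (k - 1) = (0::'a) \<or> of_nat k = (0::'a)" by simp
  then have "CHAR('a) dvd k - 1 \<or> CHAR('a) dvd k" by (simp add: of_nat_eq_0_iff_char_dvd)
  then show ?thesis
  proof
    assume "CHAR('a) dvd k - 1"
    with True have "k mod CHAR('a) = 1 mod CHAR('a)" by (subst mod_eq_dvd_iff_nat) auto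
    then show ?thesis by simp
  qed simp
next
  case False
  then have "k = 0 \<or> k = 1" by auto
  then show ?thesis by auto
qed

lemma pderiv_pderiv_eq_0_imp_pcompose_decomp:
  fixes a :: "'a::idom poly"
  defines "m \<equiv> monom 1 CHAR('a) :: 'a poly"
  assumes "pderiv (pderiv a) = 0"
  shows "\<exists>f1 f2. a = pcompose f1 m + [:0, 1:] * pcompose f2 m"
proof -
  let ?P = "CHAR('a)" and ?c = "coeff a"
  define f1 where "f1 = (\<Sum>k\<le>degree a. if k mod ?P = 0 then monom (?c k) (k div ?P) else 0)"
  define f2 where "f2 = (\<Sum>k\<le>degree a. if k mod ?P = 0 then 0 else monom (?c k) (k div ?P))"
  have "monom (?c k) k = pcompose (if k mod ?P = 0 then monom (?c k) (k div ?P) else 0) m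
          + [:0, 1:] * pcompose (if k mod ?P = 0 then 0 else monom (?c k) (k div ?P)) m" for k
    using pderiv_pderiv_eq_0_imp_mod_CHAR[OF assms(2), of k]
    by (cases "?c k = 0")
       (auto simp: m_def monom_eq_pcompose_monom monom_eq_X_mult_pcompose_monom)
  then have "(\<Sum>k\<le>degree a. monom (?c k) k) = pcompose f1 m + [:0, 1:] * pcompose f2 m"
    by (simp add: f1_def f2_def pcompose_sum sum_distrib_left sum.distrib)
  then show ?thesis by (metis poly_as_sum_of_monoms)
qed

lemma wronskian_pcompose_decomp:
  fixes f1 f2 g1 g2 :: "'a::idom poly"
  defines "m \<equiv> monom 1 CHAR('a) :: 'a poly"
  shows "wronskian (pcompose f1 m + [:0, 1:] * pcompose f2 m) (pcompose g1 m + [:0, 1:] * pcompose g2 m)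
           = pcompose (f2 * g1 - f1 * g2) m"
  by (simp add: m_def wronskian_def pderiv_add pderiv_mult pderiv_pcompose_monom_CHAR pderiv_pCons
      pcompose_diff pcompose_mult algebra_simps)

lemma pcompose_monom_eq_const_imp:
  assumes "pcompose h (monom 1 n) = [:c::'a::idom:]" and "n > 0"
  shows "h = [:c:]"
proof -
  have "degree h = 0"
    using degree_pcompose[of h "monom 1 n"] assms by (simp add: degree_monom_eq)
  then show ?thesis using assms(1) by (metis degree_0_id pcompose_const)
qed

theorem lemma3p1:
  fixes \<phi> :: "'a::field poly fract" and p :: nat
  assumes "CHAR('a) = p" and "p > 0"
    and "\<forall>x :: 'a alg_closure. \<not> finite_critical_point \<phi> x"
  shows "\<exists>f1 f2 g1 g2 :: 'a poly.
           pcompose g1 (monom 1 p) + [:0, 1:] * pcompose g2 (monom 1 p) \<noteq> 0 \<and>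
           \<phi> = Fract (pcompose f1 (monom 1 p) + [:0, 1:] * pcompose f2 (monom 1 p))
                      (pcompose g1 (monom 1 p) + [:0, 1:] * pcompose g2 (monom 1 p)) \<and>
           (\<exists>c. c \<noteq> 0 \<and> f2 * g1 - f1 * g2 = [:c:])"
proof -
  obtain a b where b: "b \<noteq> 0" and cop: "coprime a b" and \<phi>: "\<phi> = Fract a b"
    using Fract_coprime_exists by blast
  obtain c where c: "c \<noteq> 0" "wronskian a b = [:c:]"
    using no_finite_critical_point_imp_wronskian_const[OF b cop] assms(3) \<phi> by blast
  then have "pderiv (wronskian a b) = 0" by (simp add: pderiv_pCons)
  note pderiv2_eq_0 = pderiv_wronskian_eq_0_imp_pderiv_pderiv_eq_0[OF cop this]
  obtain f1 f2 where fa: "a = pcompose f1 (monom 1 p) + [:0, 1:] * pcompose f2 (monom 1 p)"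
    using pderiv_pderiv_eq_0_imp_pcompose_decomp[OF pderiv2_eq_0(1)] assms(1) by blast
  obtain g1 g2 where gb: "b = pcompose g1 (monom 1 p) + [:0, 1:] * pcompose g2 (monom 1 p)"
    using pderiv_pderiv_eq_0_imp_pcompose_decomp[OF pderiv2_eq_0(2)] assms(1) by blast
  have "pcompose (f2 * g1 - f1 * g2) (monom 1 p) = [:c:]"
    using wronskian_pcompose_decomp[of f1 f2 g1 g2] c(2) fa gb assms(1) by simp
  then have "f2 * g1 - f1 * g2 = [:c:]" using assms(2) by (rule pcompose_monom_eq_const_imp)
  then show ?thesis using b \<phi> fa gb c(1) by blast
qed

end
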